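(* Let $S$ be a non-empty poset and $\mathcal{L}=(L,\wedge,\vee,0,1)$ a bounded lattice with an $S$-action $\rightharpoonup$. Define $s\rightharpoonup^* x=(s\rightharpoonup 1)\wedge x$ for $s\in S$, $x\in L$. Then $((\mathcal{L},\rightharpoonup)^0)^0=(\mathcal{L},\rightharpoonup^* )$.
   Context: An $S$-action on a lattice $(L,\wedge,\vee)$ is a map $\rightharpoonup:S\times L\to L$ such that $s_1\leq s_2\Rightarrow s_1\rightharpoonup x\leq s_2\rightharpoonup x$; $x\leq y\Rightarrow s\rightharpoonup x\leq s\rightharpoonup y$; and $s\rightharpoonup x\leq x$. For a bounded lattice $(L,\wedge,\vee,0,1)$ with $S$-action $\rightharpoonup$, its dual $(\mathcal{L},\rightharpoonup)^0$ is the bounded lattice $(L,\vee,\wedge,1,0)$ (order reversed) with the action of the dual poset $S^0=(S,\geq)$ given by $s\rightharpoonup^0 x=(s\rightharpoonup 1)\vee x$ (here $1$ is the top of the original lattice). The double dual is formed by applying this construction twice (so its poset is $(S^0)^0=S$). *)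

theory Defs
  imports Main "HOL-Library.Dual_Ordered_Lattice"
begin

definition is_S_action :: "('s::order \<Rightarrow> 'l::lattice \<Rightarrow> 'l) \<Rightarrow> bool" where
  "is_S_action act \<longleftrightarrow>
     (\<forall>s1 s2 x. s1 \<le> s2 \<longrightarrow> act s1 x \<le> act s2 x) \<and>
     (\<forall>s x y. x \<le> y \<longrightarrow> act s x \<le> act s y) \<and>
     (\<forall>s x. act s x \<le> x)"

text \<open>The dual of a bounded lattice with S-action: the lattice is the order dual
  'l dual (meet and join swapped, 0 and 1 swapped), the poset is the dual poset
  's dual, and the action is s acting on x as (s acting on 1) joined with x, where
  the join and the top 1 are those of the ORIGINAL lattice.\<close>
definition dual_act :: "('s::order \<Rightarrow> 'l::bounded_lattice \<Rightarrow> 'l) \<Rightarrow> ('s dual \<Rightarrow> 'l dual \<Rightarrow> 'l dual)" where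
  "dual_act act = (\<lambda>s x. dual (sup (act (undual s) top) (undual x)))"

definition star_act :: "('s::order \<Rightarrow> 'l::bounded_lattice \<Rightarrow> 'l) \<Rightarrow> ('s \<Rightarrow> 'l \<Rightarrow> 'l)" where
  "star_act act = (\<lambda>s x. inf (act s top) x)"

end

theory Submission
  imports Defs
begin

text \<open>Unfolding twice, the outer action applies the inner one to the top of \<open>'l dual\<close>,
  which is \<open>0\<close>, and joins in \<open>'l dual\<close>, which is meet: so \<open>s \<rightharpoonup>\<^sup>0\<^sup>0 x = ((s \<rightharpoonup> 1) \<or> 0) \<and> x\<close>.
  This needs none of the action axioms.\<close>

lemma dual_act_dual_act:
  "dual_act (dual_act act) = (\<lambda>s x. dual (dual (star_act act (undual (undual s)) (undual (undual x)))))"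
  by (intro ext) (simp add: dual_act_def star_act_def)

theorem mainTheorem8:
  fixes act :: "'s::order \<Rightarrow> 'l::bounded_lattice \<Rightarrow> 'l"
  assumes "is_S_action act"
  shows "(\<forall>s t :: 's. dual (dual s) \<le> dual (dual t) \<longleftrightarrow> s \<le> t)
       \<and> (\<forall>x y :: 'l. dual (dual x) \<le> dual (dual y) \<longleftrightarrow> x \<le> y)
       \<and> (\<forall>x y :: 'l. inf (dual (dual x)) (dual (dual y)) = dual (dual (inf x y)))
       \<and> (\<forall>x y :: 'l. sup (dual (dual x)) (dual (dual y)) = dual (dual (sup x y)))
       \<and> (bot :: 'l dual dual) = dual (dual bot) \<and> (top :: 'l dual dual) = dual (dual top)
       \<and> dual_act (dual_act act) = (\<lambda>s x. dual (dual (star_act act (undual (undual s)) (undual (undual x)))))"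
  using dual_act_dual_act by (simp add: dual_less_eq_iff)

end
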